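(* Let $a\ge b\ge1$ be integers with either $b\ge2$, or $b=1$ and $a\ge5$, and $A=\begin{pmatrix}2&-a\\-b&2\end{pmatrix}$. Then: (1) for $i=1,2$ and $j,k\in\mathbb Z_+$, $\gamma=\beta_i^k+\beta_i^j$ satisfies $(\gamma,\gamma)>0$; moreover (a) if $b\ge2$, then $\beta_i^k+\beta_i^j$ is never a root; (b) if $b=1$ and $a\ge5$, then $\beta_1^{2k+1}+\beta_1^{2k+3}$ and $\beta_2^{2k}+\beta_2^{2k+2}$ ($k\in\mathbb Z_+$) are real roots, and these are the only pairs of roots of the same type ($\beta_1^\cdot,\beta_1^\cdot$ or $\beta_2^\cdot,\beta_2^\cdot$) whose sum is a real root; (2) for all $j,k\in\mathbb Z_+$, $\gamma=\beta_1^k+\beta_2^j$ is a root, and $(\gamma,\gamma)\le0$ unless $b=1$ and $(k,j)=(0,0)$.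
   Context: Let $\mathfrak g(A)$ be the Kac–Moody algebra with simple roots $\alpha_1,\alpha_2$, root system $\Delta$, invariant form $(\alpha_1,\alpha_1)=2$, $(\alpha_2,\alpha_2)=2a/b$, $(\alpha_1,\alpha_2)=-a$; a root $\alpha$ is real iff $(\alpha,\alpha)>0$. $\mathbb Z_+=\{0,1,2,\dots\}$. Define $c_0=d_0=0$, $c_1=d_1=1$, $c_{k+2}+c_k=a d_{k+1}$, $d_{k+2}+d_k=b c_{k+1}$, and $\beta_1^j=c_j\alpha_1+d_{j+1}\alpha_2$, $\beta_2^j=c_{j+1}\alpha_1+d_j\alpha_2$ (the positive real roots). *)

theory Defs
  imports Complex_Main
begin

text \<open>Elements of the root lattice are written as pairs (m,n) meaning m*alpha1 + n*alpha2.\<close>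

type_synonym lat = "int \<times> int"

definition ip :: "int \<Rightarrow> int \<Rightarrow> lat \<Rightarrow> lat \<Rightarrow> real" where
  "ip a b x y = 2 * of_int (fst x) * of_int (fst y)
     + (2 * of_int a / of_int b) * of_int (snd x) * of_int (snd y)
     - of_int a * (of_int (fst x) * of_int (snd y) + of_int (snd x) * of_int (fst y))"

definition ladd :: "lat \<Rightarrow> lat \<Rightarrow> lat" where
  "ladd x y = (fst x + fst y, snd x + snd y)"

text \<open>Simple reflections from the Cartan matrix A = [[2,-a],[-b,2]]:
  s_i(lambda) = lambda - <lambda, alpha_i^vee> alpha_i.\<close>
definition refl1 :: "int \<Rightarrow> int \<Rightarrow> lat \<Rightarrow> lat" where
  "refl1 a b v = (a * snd v - fst v, snd v)"
definition refl2 :: "int \<Rightarrow> int \<Rightarrow> lat \<Rightarrow> lat" where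
  "refl2 a b v = (fst v, b * fst v - snd v)"

inductive_set weyl_orbit :: "int \<Rightarrow> int \<Rightarrow> lat set \<Rightarrow> lat set" for a b S where
  base: "v \<in> S \<Longrightarrow> v \<in> weyl_orbit a b S"
| r1: "v \<in> weyl_orbit a b S \<Longrightarrow> refl1 a b v \<in> weyl_orbit a b S"
| r2: "v \<in> weyl_orbit a b S \<Longrightarrow> refl2 a b v \<in> weyl_orbit a b S"

definition real_roots :: "int \<Rightarrow> int \<Rightarrow> lat set" where
  "real_roots a b = weyl_orbit a b {(1,0),(0,1)}"

text \<open>Kac's fundamental set K: nonzero nonnegative elements with connected support
  (the Dynkin diagram has an edge iff a \<noteq> 0) and nonpositive pairing with all simple roots.\<close>
definition Kset :: "int \<Rightarrow> int \<Rightarrow> lat set" where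
  "Kset a b = {v. fst v \<ge> 0 \<and> snd v \<ge> 0 \<and> v \<noteq> (0,0)
      \<and> (fst v = 0 \<or> snd v = 0 \<or> a \<noteq> 0)
      \<and> ip a b v (1,0) \<le> 0 \<and> ip a b v (0,1) \<le> 0}"

definition pos_imag_roots :: "int \<Rightarrow> int \<Rightarrow> lat set" where
  "pos_imag_roots a b = weyl_orbit a b (Kset a b)"

definition roots :: "int \<Rightarrow> int \<Rightarrow> lat set" where
  "roots a b = real_roots a b \<union> pos_imag_roots a b
      \<union> (\<lambda>v. (- fst v, - snd v)) ` pos_imag_roots a b"

fun cd :: "int \<Rightarrow> int \<Rightarrow> nat \<Rightarrow> int \<times> int" where
  "cd a b 0 = (0, 0)"
| "cd a b (Suc 0) = (1, 1)"
| "cd a b (Suc (Suc k)) =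
     (a * snd (cd a b (Suc k)) - fst (cd a b k), b * fst (cd a b (Suc k)) - snd (cd a b k))"

definition cseq :: "int \<Rightarrow> int \<Rightarrow> nat \<Rightarrow> int" where "cseq a b k = fst (cd a b k)"
definition dseq :: "int \<Rightarrow> int \<Rightarrow> nat \<Rightarrow> int" where "dseq a b k = snd (cd a b k)"

definition beta1 :: "int \<Rightarrow> int \<Rightarrow> nat \<Rightarrow> lat" where
  "beta1 a b j = (cseq a b j, dseq a b (j + 1))"
definition beta2 :: "int \<Rightarrow> int \<Rightarrow> nat \<Rightarrow> lat" where
  "beta2 a b j = (cseq a b (j + 1), dseq a b j)"

definition beta :: "int \<Rightarrow> int \<Rightarrow> nat \<Rightarrow> nat \<Rightarrow> lat" where
  "beta a b i j = (if i = 1 then beta1 a b j else beta2 a b j)"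

end

theory Submission
  imports Defs
begin

(*
  Put q(x, y) = b x^2 + a y^2 - a b x y, so that (v, v) = 2 q(v) / b; the simple reflections
  preserve q. Hence a real root has q = b and b | y, or q = a and a | x, and a positive imaginary
  root has q <= 0. Conversely a nonnegative nonzero v with q(v) <= 0 is a positive imaginary root:
  outside K, reflecting the coordinate that violates the K-inequality lowers x + y, and the result
  stays nonnegative because q <= 0 rules out coordinates of opposite signs.

  As s_2 beta_2^j = beta_1^(j+1) and s_1 beta_1^j = beta_2^(j+1), every beta_i^k + beta_i^j is a
  Weyl translate of a sum with one index 0, and every beta_1^k + beta_2^j one of beta_1^0 + beta_2^n
  or beta_1^n + beta_2^0. For those, q is explicit in the gaps c_(n+2) - c_n and d_(n+2) - d_n,
  which grow along each parity class since c_(n+4) - 2 c_(n+2) + c_n = (ab - 4) c_(n+2); bounding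
  the first gap of each class settles every case.
*)

section \<open>The norm form and the root sets\<close>

definition qform :: "int \<Rightarrow> int \<Rightarrow> lat \<Rightarrow> int" where
  "qform a b v = b * (fst v)\<^sup>2 + a * (snd v)\<^sup>2 - a * b * fst v * snd v"

lemma qform_simple_roots [simp]: "qform a b (1, 0) = b" "qform a b (0, 1) = a"
  by (simp_all add: qform_def)

lemma ip_self_eq_qform: "b \<noteq> 0 \<Longrightarrow> ip a b v v = 2 * of_int (qform a b v) / of_int b"
  by (simp add: ip_def qform_def field_simps power2_eq_square)

lemma ip_self_pos_iff: "0 < b \<Longrightarrow> 0 < ip a b v v \<longleftrightarrow> 0 < qform a b v"
  by (simp add: ip_self_eq_qform zero_less_divide_iff)

lemma ip_self_nonpos_iff: "0 < b \<Longrightarrow> ip a b v v \<le> 0 \<longleftrightarrow> qform a b v \<le> 0"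
  by (simp add: ip_self_eq_qform divide_le_0_iff)

lemma qform_uminus: "qform a b (- fst v, - snd v) = qform a b v"
  by (simp add: qform_def)

lemma qform_ladd:
  "qform a b (ladd u v) = qform a b u + qform a b v
     + (2 * b * fst u * fst v + 2 * a * snd u * snd v - a * b * (fst u * snd v + snd u * fst v))"
  by (simp add: qform_def ladd_def power2_eq_square algebra_simps)

lemma qform_pos_if_mult_nonpos:
  assumes "0 < a" "0 < b" "x * y \<le> 0" "(x, y) \<noteq> (0, 0)"
  shows "0 < qform a b (x, y)"
proof -
  have "0 < b * x\<^sup>2 + a * y\<^sup>2"
    using assms by (auto simp: add_pos_nonneg add_nonneg_pos)
  moreover have "a * b * x * y \<le> 0"
    using assms by (simp add: mult_nonneg_nonpos mult.assoc)
  ultimately show ?thesis by (simp add: qform_def)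
qed

lemma qform_nonpos_sign:
  assumes "0 < a" "0 < b" "qform a b (x, y) \<le> 0"
  shows "0 \<le> y \<Longrightarrow> 0 \<le> x" and "0 \<le> x \<Longrightarrow> 0 \<le> y"
proof -
  have "\<not> (x * y \<le> 0 \<and> (x, y) \<noteq> (0, 0))"
    using qform_pos_if_mult_nonpos[OF assms(1,2), of x y] assms(3) by linarith
  then show "0 \<le> y \<Longrightarrow> 0 \<le> x" and "0 \<le> x \<Longrightarrow> 0 \<le> y"
    by (auto simp: mult_le_0_iff)
qed

lemma ladd_commute: "ladd u v = ladd v u"
  by (simp add: ladd_def add.commute)

lemma refl1_refl1 [simp]: "refl1 a b (refl1 a b v) = v"
  and refl2_refl2 [simp]: "refl2 a b (refl2 a b v) = v"
  by (simp_all add: refl1_def refl2_def)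

lemma qform_refl1 [simp]: "qform a b (refl1 a b v) = qform a b v"
  and qform_refl2 [simp]: "qform a b (refl2 a b v) = qform a b v"
  by (simp_all add: qform_def refl1_def refl2_def power2_eq_square algebra_simps)

lemma refl1_ladd: "refl1 a b (ladd u v) = ladd (refl1 a b u) (refl1 a b v)"
  and refl2_ladd: "refl2 a b (ladd u v) = ladd (refl2 a b u) (refl2 a b v)"
  by (simp_all add: refl1_def refl2_def ladd_def algebra_simps)

lemma weyl_orbit_refl1_iff [simp]: "refl1 a b v \<in> weyl_orbit a b S \<longleftrightarrow> v \<in> weyl_orbit a b S"
  by (metis refl1_refl1 weyl_orbit.r1)

lemma weyl_orbit_refl2_iff [simp]: "refl2 a b v \<in> weyl_orbit a b S \<longleftrightarrow> v \<in> weyl_orbit a b S"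
  by (metis refl2_refl2 weyl_orbit.r2)

lemma real_root_qform:
  assumes "v \<in> real_roots a b"
  shows "(qform a b v = b \<and> b dvd snd v) \<or> (qform a b v = a \<and> a dvd fst v)"
  using assms unfolding real_roots_def
proof (induction rule: weyl_orbit.induct)
  case (base v)
  then show ?case by (auto simp: qform_def)
next
  case (r1 v)
  have "a dvd a * snd v - fst v \<longleftrightarrow> a dvd fst v"
    using dvd_add_times_triv_left_iff[of a "snd v" "- fst v"] by (simp add: mult.commute)
  moreover have "fst (refl1 a b v) = a * snd v - fst v" "snd (refl1 a b v) = snd v"
    by (simp_all add: refl1_def)
  ultimately show ?case using r1 by auto
next
  case (r2 v)
  have "b dvd b * fst v - snd v \<longleftrightarrow> b dvd snd v"
    using dvd_add_times_triv_left_iff[of b "fst v" "- snd v"] by (simp add: mult.commute)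
  moreover have "fst (refl2 a b v) = fst v" "snd (refl2 a b v) = b * fst v - snd v"
    by (simp_all add: refl2_def)
  ultimately show ?case using r2 by auto
qed

lemma Kset_iff:
  assumes "0 < a" "0 < b"
  shows "v \<in> Kset a b \<longleftrightarrow> 0 \<le> fst v \<and> 0 \<le> snd v \<and> v \<noteq> (0, 0)
    \<and> 2 * fst v \<le> a * snd v \<and> 2 * snd v \<le> b * fst v"
proof -
  have ip1: "ip a b v (1, 0) = of_int (2 * fst v - a * snd v)"
    by (simp add: ip_def)
  have ip2: "ip a b v (0, 1) = of_int (a * (2 * snd v - b * fst v)) / of_int b"
    using assms by (simp add: ip_def field_simps)
  have "ip a b v (1, 0) \<le> 0 \<longleftrightarrow> 2 * fst v \<le> a * snd v"
    unfolding ip1 of_int_le_0_iff by linarith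
  moreover have "ip a b v (0, 1) \<le> 0 \<longleftrightarrow> 2 * snd v \<le> b * fst v"
    unfolding ip2 using assms
    by (simp only: divide_le_0_iff of_int_le_0_iff of_int_0_less_iff mult_le_0_iff) auto
  ultimately show ?thesis
    using assms by (auto simp: Kset_def)
qed

lemma qform_Kset_nonpos:
  assumes "0 < a" "0 < b" "v \<in> Kset a b"
  shows "qform a b v \<le> 0"
proof -
  obtain x y where v: "v = (x, y)" by fastforce
  have "2 * qform a b v = b * x * (2 * x - a * y) + a * y * (2 * y - b * x)"
    by (simp add: v qform_def power2_eq_square algebra_simps)
  moreover have "b * x * (2 * x - a * y) \<le> 0" "a * y * (2 * y - b * x) \<le> 0"
    using assms by (simp_all add: v Kset_iff mult_nonneg_nonpos)
  ultimately show ?thesis by linarith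
qed

lemma qform_pos_imag_root_nonpos:
  assumes "0 < a" "0 < b" "v \<in> pos_imag_roots a b"
  shows "qform a b v \<le> 0"
  using assms(3) unfolding pos_imag_roots_def
  by (induction rule: weyl_orbit.induct) (simp_all add: qform_Kset_nonpos assms(1,2))

lemma not_root_if_qform_pos:
  assumes "0 < a" "0 < b" "0 < qform a b v" "v \<notin> real_roots a b"
  shows "v \<notin> roots a b"
proof
  assume "v \<in> roots a b"
  then obtain w where "w \<in> pos_imag_roots a b" "v = w \<or> v = (- fst w, - snd w)"
    using assms(4) unfolding roots_def by blast
  then show False
    using qform_pos_imag_root_nonpos[OF assms(1,2), of w] assms(3) qform_uminus[of a b w] by auto
qed

lemma pos_imag_root_if_qform_nonpos:
  assumes "0 < a" "0 < b"
  shows "0 \<le> fst v \<Longrightarrow> 0 \<le> snd v \<Longrightarrow> v \<noteq> (0, 0) \<Longrightarrow> qform a b v \<le> 0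
    \<Longrightarrow> v \<in> pos_imag_roots a b"
proof (induction "nat (fst v + snd v)" arbitrary: v rule: less_induct)
  case less
  obtain x y where v: "v = (x, y)" by fastforce
  consider "2 * x \<le> a * y \<and> 2 * y \<le> b * x" | "a * y < 2 * x" | "b * x < 2 * y"
    by linarith
  then show ?case
  proof cases
    case 1
    then have "v \<in> Kset a b" using less.prems assms by (simp add: Kset_iff v)
    then show ?thesis unfolding pos_imag_roots_def by (rule weyl_orbit.base)
  next
    case 2
    have w: "refl1 a b (x, y) = (a * y - x, y)" by (simp add: refl1_def)
    have "0 \<le> a * y - x"
      using qform_nonpos_sign(1)[OF assms, of "a * y - x" y] less.prems
      by (metis qform_refl1 snd_conv v w)
    then have "refl1 a b v \<in> pos_imag_roots a b"
      using 2 less qform_refl1[of a b v] by (intro less.hyps) (auto simp: w v)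
    then show ?thesis by (simp add: pos_imag_roots_def)
  next
    case 3
    have w: "refl2 a b (x, y) = (x, b * x - y)" by (simp add: refl2_def)
    have "0 \<le> b * x - y"
      using qform_nonpos_sign(2)[OF assms, of x "b * x - y"] less.prems
      by (metis qform_refl2 fst_conv v w)
    then have "refl2 a b v \<in> pos_imag_roots a b"
      using 3 less qform_refl2[of a b v] by (intro less.hyps) (auto simp: w v)
    then show ?thesis by (simp add: pos_imag_roots_def)
  qed
qed

lemma cseq_0 [simp]: "cseq a b 0 = 0" and dseq_0 [simp]: "dseq a b 0 = 0"
  by (simp_all add: cseq_def dseq_def)

lemma cseq_1 [simp]: "cseq a b (Suc 0) = 1" and dseq_1 [simp]: "dseq a b (Suc 0) = 1"
  by (simp_all add: cseq_def dseq_def)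

lemma cseq_Suc_Suc [simp]: "cseq a b (Suc (Suc n)) = a * dseq a b (Suc n) - cseq a b n"
  and dseq_Suc_Suc [simp]: "dseq a b (Suc (Suc n)) = b * cseq a b (Suc n) - dseq a b n"
  by (simp_all add: cseq_def dseq_def)

lemma beta1_0: "beta1 a b 0 = (0, 1)"
  and beta2_0: "beta2 a b 0 = (1, 0)"
  by (simp_all add: beta1_def beta2_def)

lemma refl1_beta1: "refl1 a b (beta1 a b n) = beta2 a b (Suc n)"
  and refl2_beta2: "refl2 a b (beta2 a b n) = beta1 a b (Suc n)"
  by (simp_all add: refl1_def refl2_def beta1_def beta2_def)

lemma refl1_beta2_Suc: "refl1 a b (beta2 a b (Suc n)) = beta1 a b n"
  and refl2_beta1_Suc: "refl2 a b (beta1 a b (Suc n)) = beta2 a b n"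
  by (metis refl1_beta1 refl1_refl1, metis refl2_beta2 refl2_refl2)

lemma qform_beta:
  "qform a b (beta1 a b n) = (if even n then a else b)
   \<and> qform a b (beta2 a b n) = (if even n then b else a)"
proof (induction n)
  case 0
  then show ?case by (simp add: beta1_0 beta2_0)
next
  case (Suc n)
  then show ?case by (metis qform_refl1 qform_refl2 refl1_beta1 refl2_beta2 even_Suc)
qed

lemmas qform_beta1 = qform_beta[THEN conjunct1]
  and qform_beta2 = qform_beta[THEN conjunct2]

lemma ladd_beta1_Suc:
  "ladd (beta1 a b (Suc k)) (beta1 a b (Suc j)) = refl2 a b (ladd (beta2 a b k) (beta2 a b j))"
  and ladd_beta2_Suc:
  "ladd (beta2 a b (Suc k)) (beta2 a b (Suc j)) = refl1 a b (ladd (beta1 a b k) (beta1 a b j))"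
  by (simp_all add: refl1_ladd refl2_ladd refl1_beta1 refl2_beta2)

lemma ladd_beta1_beta2_Suc_Suc:
  "ladd (beta1 a b k) (beta2 a b (Suc (Suc j)))
     = refl1 a b (refl2 a b (ladd (beta1 a b (Suc (Suc k))) (beta2 a b j)))"
  by (simp add: refl1_ladd refl2_ladd refl1_beta1 refl2_beta2 refl1_beta2_Suc refl2_beta1_Suc)

lemma ladd_beta1_Suc_beta2_0:
  "ladd (beta1 a b (Suc j)) (beta2 a b 0) = refl2 a b (ladd (beta1 a b 1) (beta2 a b j))"
  by (simp add: refl2_ladd refl2_beta2 refl2_beta1_Suc ladd_commute)

lemma qform_beta1_0_ladd_beta1:
  "qform a b (ladd (beta1 a b 0) (beta1 a b n))
     = a + qform a b (beta1 a b n) + a * (2 * dseq a b (Suc n) - b * cseq a b n)"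
  by (simp add: qform_ladd beta1_0 beta1_def[of a b n] algebra_simps)

lemma qform_beta2_0_ladd_beta2:
  "qform a b (ladd (beta2 a b 0) (beta2 a b n))
     = b + qform a b (beta2 a b n) + b * (2 * cseq a b (Suc n) - a * dseq a b n)"
  by (simp add: qform_ladd beta2_0 beta2_def[of a b n] algebra_simps)

lemma qform_beta1_0_ladd_beta2:
  "qform a b (ladd (beta1 a b 0) (beta2 a b n))
     = a + qform a b (beta2 a b n) - a * (dseq a b (Suc (Suc n)) - dseq a b n)"
  by (simp add: qform_ladd beta1_0 beta2_0 beta2_def[of a b n] algebra_simps)

lemma qform_ladd_beta1_beta2_0:
  "qform a b (ladd (beta1 a b n) (beta2 a b 0))
     = b + qform a b (beta1 a b n) - b * (cseq a b (Suc (Suc n)) - cseq a b n)"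
  by (simp add: qform_ladd beta1_0 beta2_0 beta1_def[of a b n] algebra_simps)

section \<open>Growth of the sequences c and d\<close>

lemma mono_step2:
  fixes f :: "nat \<Rightarrow> 'a::order"
  assumes step: "\<And>n. f n \<le> f (n + 2)" and "p \<le> q" and "even (q - p)"
  shows "f p \<le> f q"
proof -
  obtain t where q: "q = p + 2 * t"
    using assms(2,3) by (metis evenE le_add_diff_inverse)
  have "f (p + 2 * 0) \<le> f (p + 2 * t)"
    by (rule lift_Suc_mono_le[of "\<lambda>t. f (p + 2 * t)"]) (use step[simplified] in simp_all)
  then show ?thesis by (simp add: q)
qed

(* ab >= 4: the Cartan matrix is of affine or indefinite type. *)
locale nonfinite_rank2 =
  fixes a b :: int
  assumes a_pos: "0 < a" and b_pos: "0 < b" and ab_ge_4: "4 \<le> a * b"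
begin

abbreviation "c \<equiv> cseq a b"
abbreviation "d \<equiv> dseq a b"

lemma cd_bounds:
  "0 \<le> c n \<and> 0 \<le> d n \<and> 1 \<le> c (Suc n) \<and> 1 \<le> d (Suc n)
   \<and> 2 * d n \<le> b * c (Suc n) \<and> 2 * c n \<le> a * d (Suc n)"
proof (induction n)
  case 0
  then show ?case using a_pos b_pos by simp
next
  case (Suc n)
  then have IH: "0 \<le> c n" "0 \<le> d n" "1 \<le> c (Suc n)" "1 \<le> d (Suc n)"
    "2 * d n \<le> b * c (Suc n)" "2 * c n \<le> a * d (Suc n)"
    by auto
  have "1 \<le> a * d (Suc n)" "1 \<le> b * c (Suc n)"
    using IH a_pos b_pos mult_mono[of 1 a 1 "d (Suc n)"] mult_mono[of 1 b 1 "c (Suc n)"]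
    by simp_all
  moreover have "2 * (b * c n) \<le> a * b * d (Suc n)" "2 * (a * d n) \<le> a * b * c (Suc n)"
    using IH(5,6) a_pos b_pos mult_left_mono[OF IH(6), of b] mult_left_mono[OF IH(5), of a]
    by (simp_all add: algebra_simps)
  moreover have "4 * d (Suc n) \<le> a * b * d (Suc n)" "4 * c (Suc n) \<le> a * b * c (Suc n)"
    using IH ab_ge_4 by (simp_all add: mult_right_mono)
  moreover have "b * c (Suc (Suc n)) = a * b * d (Suc n) - b * c n"
    and "a * d (Suc (Suc n)) = a * b * c (Suc n) - a * d n"
    by (simp_all add: algebra_simps)
  ultimately show ?case
    using IH cseq_Suc_Suc[of a b n] dseq_Suc_Suc[of a b n] by (intro conjI; linarith)
qed

lemma cseq_nonneg: "0 \<le> c n"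
  and dseq_nonneg: "0 \<le> d n"
  and cseq_Suc_pos: "1 \<le> c (Suc n)"
  and two_dseq_le: "2 * d n \<le> b * c (Suc n)"
  and two_cseq_le: "2 * c n \<le> a * d (Suc n)"
  using cd_bounds by auto

lemma cseq_le_two_dseq: "b * c n \<le> 2 * d (Suc n)"
  and dseq_le_two_cseq: "a * d n \<le> 2 * c (Suc n)"
  using two_dseq_le[of "n - 1"] two_cseq_le[of "n - 1"] by (cases n; simp)+

lemma cseq_gap_step: "c (n + 2) - c n \<le> c (n + 2 + 2) - c (n + 2)"
  and dseq_gap_step: "d (n + 2) - d n \<le> d (n + 2 + 2) - d (n + 2)"
proof -
  have "c (n + 2 + 2) - 2 * c (n + 2) + c n = (a * b - 4) * c (n + 2)"
    and "d (n + 2 + 2) - 2 * d (n + 2) + d n = (a * b - 4) * d (n + 2)"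
    by (simp_all add: eval_nat_numeral algebra_simps)
  moreover have "0 \<le> (a * b - 4) * c (n + 2)" "0 \<le> (a * b - 4) * d (n + 2)"
    using ab_ge_4 cseq_nonneg[of "n + 2"] dseq_nonneg[of "n + 2"] by simp_all
  ultimately show "c (n + 2) - c n \<le> c (n + 2 + 2) - c (n + 2)"
    and "d (n + 2) - d n \<le> d (n + 2 + 2) - d (n + 2)"
    by linarith+
qed

lemma cseq_gap_mono: "p \<le> q \<Longrightarrow> even (q - p) \<Longrightarrow> c (p + 2) - c p \<le> c (q + 2) - c q"
  and dseq_gap_mono: "p \<le> q \<Longrightarrow> even (q - p) \<Longrightarrow> d (p + 2) - d p \<le> d (q + 2) - d q"
  by (rule mono_step2[of "\<lambda>n. c (n + 2) - c n"], rule cseq_gap_step, assumption+)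
    (rule mono_step2[of "\<lambda>n. d (n + 2) - d n"], rule dseq_gap_step, assumption+)

lemma qform_beta1_0_sum_gt: "a < qform a b (ladd (beta1 a b 0) (beta1 a b n))"
  and qform_beta2_0_sum_gt: "b < qform a b (ladd (beta2 a b 0) (beta2 a b n))"
proof -
  have "0 < qform a b (beta1 a b n)" "0 < qform a b (beta2 a b n)"
    using a_pos b_pos by (simp_all add: qform_beta1 qform_beta2)
  moreover have "0 \<le> a * (2 * d (Suc n) - b * c n)" "0 \<le> b * (2 * c (Suc n) - a * d n)"
    using a_pos b_pos cseq_le_two_dseq dseq_le_two_cseq by simp_all
  ultimately show "a < qform a b (ladd (beta1 a b 0) (beta1 a b n))"
    and "b < qform a b (ladd (beta2 a b 0) (beta2 a b n))"
    by (simp_all add: qform_beta1_0_ladd_beta1 qform_beta2_0_ladd_beta2)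
qed

lemma qform_same_type_sum_pos:
  "0 < qform a b (ladd (beta1 a b k) (beta1 a b j)) \<and> 0 < qform a b (ladd (beta2 a b k) (beta2 a b j))"
proof (induction k arbitrary: j)
  case 0
  then show ?case
    using qform_beta1_0_sum_gt qform_beta2_0_sum_gt a_pos b_pos by (meson less_trans)
next
  case (Suc k)
  show ?case
  proof (cases j)
    case 0
    then show ?thesis
      using qform_beta1_0_sum_gt qform_beta2_0_sum_gt a_pos b_pos ladd_commute
      by (metis less_trans)
  next
    case (Suc j')
    then show ?thesis using Suc.IH by (simp add: ladd_beta1_Suc ladd_beta2_Suc)
  qed
qed

end

section \<open>Sums of two positive real roots\<close>

(* For b <= a, exactly the non-finite types other than the twisted affine A_2^(2), (a, b) = (4, 1). *)
locale nonfinite_not_A22 =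
  fixes a b :: int
  assumes b_le_a: "b \<le> a" and b_ge_1: "1 \<le> b" and b_ge_2_or_a_ge_5: "2 \<le> b \<or> (b = 1 \<and> 5 \<le> a)"
begin

lemma a_ge_5_if_b_eq_1: "b = 1 \<Longrightarrow> 5 \<le> a"
  using b_ge_2_or_a_ge_5 by auto

sublocale nonfinite_rank2
proof
  show "0 < a" "0 < b" using b_le_a b_ge_1 by auto
  show "4 \<le> a * b"
  proof (cases "b = 1")
    case False
    then have "2 * 2 \<le> a * b" using b_le_a b_ge_1 by (intro mult_mono) auto
    then show ?thesis by simp
  qed (use a_ge_5_if_b_eq_1 in simp)
qed

lemma a_lt_b_mult_square: "a < b * (a * b - 2)\<^sup>2"
proof (cases "b = 1")
  case True
  then have "5 \<le> a" by (rule a_ge_5_if_b_eq_1)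
  then have "3 * (a - 2) \<le> (a - 2) * (a - 2)" by (intro mult_right_mono) auto
  then show ?thesis using \<open>5 \<le> a\<close> True by (simp add: power2_eq_square)
next
  case False
  then have "2 \<le> b" using b_ge_1 by simp
  define X where "X = (a * b - 2)\<^sup>2"
  have "2 * (a * b - 2) \<le> X"
    unfolding X_def power2_eq_square using ab_ge_4 by (intro mult_right_mono) auto
  moreover have "2 * X \<le> b * X"
    unfolding X_def using \<open>2 \<le> b\<close> by (intro mult_right_mono) auto
  moreover have "2 * a \<le> a * b" using \<open>2 \<le> b\<close> a_pos by simp
  ultimately show ?thesis using b_le_a \<open>2 \<le> b\<close> unfolding X_def[symmetric] by (smt (verit))
qed

lemma a_plus_b_le: "a + b \<le> a * b * (a * b - 3)"
proof (cases "b = 1")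
  case True
  then have "5 \<le> a" by (rule a_ge_5_if_b_eq_1)
  have "a * b * (a * b - 3) = a * a - 3 * a" using True by (simp add: algebra_simps)
  moreover have "5 * a \<le> a * a" using \<open>5 \<le> a\<close> by (intro mult_right_mono) auto
  ultimately show ?thesis using True \<open>5 \<le> a\<close> by linarith
next
  case False
  then have "1 * 1 \<le> (a - 1) * (b - 1)" using b_le_a b_ge_1 by (intro mult_mono) auto
  moreover have "a * b * 1 \<le> a * b * (a * b - 3)" using ab_ge_4 by (intro mult_left_mono) auto
  ultimately show ?thesis by (simp add: algebra_simps)
qed

lemma not_real_root_beta1_0_sum: "ladd (beta1 a b 0) (beta1 a b n) \<notin> real_roots a b"
  using qform_beta1_0_sum_gt[of n] b_le_a by (auto dest: real_root_qform)

lemma qform_beta2_0_sum_gt_a: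
  assumes "odd m" "3 \<le> m"
  shows "a < qform a b (ladd (beta2 a b 0) (beta2 a b (Suc m)))"
proof -
  have "c (3 + 2) - c 3 \<le> c (m + 2) - c m"
    using assms by (intro cseq_gap_mono) auto
  moreover have "c (3 + 2) - c 3 = (a * b - 2)\<^sup>2 - 2"
    by (simp add: eval_nat_numeral power2_eq_square algebra_simps)
  moreover have "2 * c (Suc (Suc m)) - a * d (Suc m) = c (m + 2) - c m"
    by simp
  ultimately have "b * (a * b - 2)\<^sup>2 \<le> b * (2 + (2 * c (Suc (Suc m)) - a * d (Suc m)))"
    using b_pos by (intro mult_left_mono) auto
  then show ?thesis
    using a_lt_b_mult_square qform_beta2_0_ladd_beta2[of a b "Suc m"] assms
    by (simp add: qform_beta2 algebra_simps)
qed

lemma real_root_beta2_0_sum_iff: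
  "ladd (beta2 a b 0) (beta2 a b n) \<in> real_roots a b \<longleftrightarrow> b = 1 \<and> n = 2"
proof
  assume "b = 1 \<and> n = 2"
  then have "ladd (beta2 a b 0) (beta2 a b n) = refl1 a b (0, 1)"
    by (simp add: eval_nat_numeral beta2_def ladd_def refl1_def)
  then show "ladd (beta2 a b 0) (beta2 a b n) \<in> real_roots a b"
    by (simp add: real_roots_def weyl_orbit.base)
next
  let ?H = "ladd (beta2 a b 0) (beta2 a b n)"
  assume "?H \<in> real_roots a b"
  then have dvd: "a dvd fst ?H" and q: "qform a b ?H = a"
    using qform_beta2_0_sum_gt[of n] by (auto dest: real_root_qform)
  define P where "P = 2 * c (Suc n) - a * d n"
  have qH: "qform a b ?H = b + qform a b (beta2 a b n) + b * P"
    unfolding P_def by (rule qform_beta2_0_ladd_beta2)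
  have "odd n \<or> n = 0 \<or> n = 2 \<or> (\<exists>m. n = Suc m \<and> odd m \<and> 3 \<le> m)"
    by presburger
  then consider "odd n" | "n = 0" | "n = 2" | m where "n = Suc m" "odd m" "3 \<le> m"
    by blast
  then show "b = 1 \<and> n = 2"
  proof cases
    case 1
    have "0 \<le> b * P" unfolding P_def using dseq_le_two_cseq b_pos by simp
    then show ?thesis using q qH 1 b_pos by (simp add: qform_beta2)
  next
    case 2
    then have "a dvd 2" "a = 4 * b"
      using dvd q qH by (simp_all add: P_def beta2_def ladd_def)
    then show ?thesis using zdvd_imp_le[of a 2] b_ge_1 by simp
  next
    case 3
    then have "a * 1 = a * (b * b)"
      using q qH by (simp add: P_def qform_beta2 eval_nat_numeral algebra_simps)
    then have "b * b = 1" using a_pos by (simp only: mult_cancel_left) simp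
    then show ?thesis using 3 b_ge_1 by (simp add: zmult_eq_1_iff)
  next
    case 4
    then show ?thesis using q qform_beta2_0_sum_gt_a[of m] by simp
  qed
qed

lemma real_root_same_type_sum_iff:
  "(ladd (beta1 a b k) (beta1 a b j) \<in> real_roots a b \<longleftrightarrow> b = 1 \<and> odd k \<and> (j = k + 2 \<or> k = j + 2))
   \<and> (ladd (beta2 a b k) (beta2 a b j) \<in> real_roots a b \<longleftrightarrow> b = 1 \<and> even k \<and> (j = k + 2 \<or> k = j + 2))"
proof (induction k arbitrary: j)
  case 0
  then show ?case using not_real_root_beta1_0_sum real_root_beta2_0_sum_iff by auto
next
  case (Suc k)
  show ?case
  proof (cases j)
    case 0
    have "ladd (beta1 a b (Suc k)) (beta1 a b 0) = ladd (beta1 a b 0) (beta1 a b (Suc k))"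
      and "ladd (beta2 a b (Suc k)) (beta2 a b 0) = ladd (beta2 a b 0) (beta2 a b (Suc k))"
      by (rule ladd_commute)+
    then show ?thesis
      using 0 not_real_root_beta1_0_sum real_root_beta2_0_sum_iff by auto
  next
    case (Suc j')
    then show ?thesis
      using Suc.IH by (simp add: ladd_beta1_Suc ladd_beta2_Suc real_roots_def)
  qed
qed

lemmas real_root_beta1_sum_iff = real_root_same_type_sum_iff[THEN conjunct1]
  and real_root_beta2_sum_iff = real_root_same_type_sum_iff[THEN conjunct2]

lemma dseq_gap_ge_2:
  assumes "\<not> (b = 1 \<and> n = 0)"
  shows "2 \<le> d (n + 2) - d n"
proof -
  have "n = 0 \<or> odd n \<or> (even n \<and> 2 \<le> n)" by presburger
  moreover have "2 \<le> d (n + 2) - d n" if "odd n"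
  proof -
    have "d (1 + 2) - d 1 \<le> d (n + 2) - d n"
      using that by (intro dseq_gap_mono) (auto elim: oddE)
    then show ?thesis using ab_ge_4 by (simp add: eval_nat_numeral mult.commute)
  qed
  moreover have "2 \<le> d (n + 2) - d n" if "even n" "2 \<le> n"
  proof -
    have "d (2 + 2) - d 2 \<le> d (n + 2) - d n"
      using that by (intro dseq_gap_mono) auto
    moreover have "2 \<le> b * (a * b - 3)"
    proof (cases "b = 1")
      case False
      then show ?thesis using b_ge_1 ab_ge_4 mult_mono[of 2 b 1 "a * b - 3"] by simp
    qed (use a_ge_5_if_b_eq_1 in simp)
    ultimately show ?thesis by (simp add: eval_nat_numeral algebra_simps)
  qed
  ultimately show ?thesis
    using assms b_ge_1 by (auto simp: eval_nat_numeral)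
qed

lemma qform_beta1_0_beta2_nonpos:
  assumes "\<not> (b = 1 \<and> n = 0)"
  shows "qform a b (ladd (beta1 a b 0) (beta2 a b n)) \<le> 0"
proof -
  have "a * 2 \<le> a * (d (n + 2) - d n)"
    using dseq_gap_ge_2[OF assms] a_pos by (intro mult_left_mono) auto
  moreover have "qform a b (beta2 a b n) \<le> a"
    using b_le_a by (simp add: qform_beta2)
  ultimately show ?thesis
    using qform_beta1_0_ladd_beta2[of a b n] by simp
qed

lemma qform_beta1_beta2_0_nonpos:
  assumes "1 \<le> n"
  shows "qform a b (ladd (beta1 a b n) (beta2 a b 0)) \<le> 0"
proof (cases "even n")
  case False
  have "c (1 + 2) - c 1 \<le> c (n + 2) - c n"
    using False by (intro cseq_gap_mono) (auto elim: oddE)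
  then have "b * 2 \<le> b * (c (n + 2) - c n)"
    using ab_ge_4 b_pos by (intro mult_left_mono) (auto simp: eval_nat_numeral mult.commute)
  then show ?thesis
    using False qform_ladd_beta1_beta2_0[of a b n] by (simp add: qform_beta1)
next
  case True
  have "c (2 + 2) - c 2 \<le> c (n + 2) - c n"
    using True assms by (intro cseq_gap_mono) (auto elim: evenE)
  then have "b * (a * (a * b - 3)) \<le> b * (c (n + 2) - c n)"
    using b_pos by (intro mult_left_mono) (auto simp: eval_nat_numeral algebra_simps)
  then show ?thesis
    using True a_plus_b_le qform_ladd_beta1_beta2_0[of a b n] by (simp add: qform_beta1 algebra_simps)
qed

lemma qform_beta1_beta2_sum_nonpos:
  "\<not> (b = 1 \<and> k = 0 \<and> j = 0) \<Longrightarrow> qform a b (ladd (beta1 a b k) (beta2 a b j)) \<le> 0"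
proof (induction k arbitrary: j rule: less_induct)
  case (less k)
  consider "k = 0" | "k = 1" | k' where "k = Suc (Suc k')"
    by (metis One_nat_def not0_implies_Suc)
  then show ?case
  proof cases
    case 1
    then show ?thesis using less.prems qform_beta1_0_beta2_nonpos by simp
  next
    case 2
    then show ?thesis
      using qform_beta1_beta2_0_nonpos[of "Suc j"] by (simp add: ladd_beta1_Suc_beta2_0)
  next
    case 3
    then show ?thesis
      using less.IH[of k' "Suc (Suc j)"] by (simp add: ladd_beta1_beta2_Suc_Suc)
  qed
qed

lemma beta1_beta2_sum_root: "ladd (beta1 a b k) (beta2 a b j) \<in> roots a b"
proof (cases "b = 1 \<and> k = 0 \<and> j = 0")
  case True
  then have "ladd (beta1 a b k) (beta2 a b j) = refl2 a b (1, 0)"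
    by (simp add: beta1_0 beta2_0 ladd_def refl2_def)
  then show ?thesis by (simp add: roots_def real_roots_def weyl_orbit.base)
next
  case False
  have "1 \<le> fst (ladd (beta1 a b k) (beta2 a b j))" "0 \<le> snd (ladd (beta1 a b k) (beta2 a b j))"
    using cseq_nonneg[of k] cseq_Suc_pos[of j] dseq_nonneg[of "Suc k"] dseq_nonneg[of j]
    by (simp_all add: beta1_def beta2_def ladd_def)
  then have "ladd (beta1 a b k) (beta2 a b j) \<in> pos_imag_roots a b"
    using False qform_beta1_beta2_sum_nonpos a_pos b_pos
    by (intro pos_imag_root_if_qform_nonpos) auto
  then show ?thesis by (simp add: roots_def)
qed

end

theorem proposition4p6:
  fixes a b :: int
  assumes "a \<ge> b" and "b \<ge> 1"
    and "b \<ge> 2 \<or> (b = 1 \<and> a \<ge> 5)"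
  shows
   "(\<forall>i\<in>{1::nat,2}. \<forall>j k.
       ip a b (ladd (beta a b i k) (beta a b i j)) (ladd (beta a b i k) (beta a b i j)) > 0)
  \<and> (b \<ge> 2 \<longrightarrow> (\<forall>i\<in>{1::nat,2}. \<forall>j k. ladd (beta a b i k) (beta a b i j) \<notin> roots a b))
  \<and> (b = 1 \<and> a \<ge> 5 \<longrightarrow>
       (\<forall>k. ladd (beta1 a b (2*k+1)) (beta1 a b (2*k+3)) \<in> real_roots a b
          \<and> ladd (beta2 a b (2*k)) (beta2 a b (2*k+2)) \<in> real_roots a b)
     \<and> (\<forall>j k. ladd (beta1 a b j) (beta1 a b k) \<in> real_roots a b \<longrightarrow>
          (\<exists>m. (j = 2*m+1 \<and> k = 2*m+3) \<or> (j = 2*m+3 \<and> k = 2*m+1)))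
     \<and> (\<forall>j k. ladd (beta2 a b j) (beta2 a b k) \<in> real_roots a b \<longrightarrow>
          (\<exists>m. (j = 2*m \<and> k = 2*m+2) \<or> (j = 2*m+2 \<and> k = 2*m))))
  \<and> (\<forall>j k. ladd (beta1 a b k) (beta2 a b j) \<in> roots a b
       \<and> (\<not> (b = 1 \<and> k = 0 \<and> j = 0) \<longrightarrow>
            ip a b (ladd (beta1 a b k) (beta2 a b j)) (ladd (beta1 a b k) (beta2 a b j)) \<le> 0))"
proof -
  interpret nonfinite_not_A22 a b
    using assms by unfold_locales auto
  have odd_pair: "(\<exists>m. (j = 2*m+1 \<and> k = 2*m+3) \<or> (j = 2*m+3 \<and> k = 2*m+1))
      \<longleftrightarrow> odd j \<and> (k = j + 2 \<or> j = k + 2)" for j k :: nat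
    by presburger
  have even_pair: "(\<exists>m. (j = 2*m \<and> k = 2*m+2) \<or> (j = 2*m+2 \<and> k = 2*m))
      \<longleftrightarrow> even j \<and> (k = j + 2 \<or> j = k + 2)" for j k :: nat
    by presburger
  show ?thesis
    unfolding odd_pair even_pair real_root_beta1_sum_iff real_root_beta2_sum_iff
    using qform_same_type_sum_pos not_root_if_qform_pos[OF a_pos b_pos]
      beta1_beta2_sum_root qform_beta1_beta2_sum_nonpos
    by (simp add: beta_def ip_self_pos_iff[OF b_pos] ip_self_nonpos_iff[OF b_pos]
        real_root_beta1_sum_iff real_root_beta2_sum_iff)
qed

end
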